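(* Order $S_n$ by $v\le w$ iff $\iota_k(v)\le\iota_k(w)$ for all $k$. Then $w\in S_n$ covers $v\in S_n$ in this order if and only if there exist $i<k$ such that: $w(j)=v(j)$ for all $j\notin\{i,k\}$; $v(i)=w(k)<w(i)=v(k)$; and $w(j)<w(k)$ for every $i<j<k$.
   Context: Permutations are written in one-line notation. The inversion table of $w\in S_n$ is $\iota(w)=(\iota_1(w),\dots,\iota_n(w))$ with $\iota_k(w)=\#\{i<w^{-1}(k):w(i)>k\}$. *)

theory Defs
  imports "HOL-Combinatorics.Permutations"
begin

text \<open>Permutations of {1..n} are functions nat => nat with p permutes {1..n}
  (identity outside {1..n}). One-line notation: w(1),...,w(n).\<close>

definition inv_table :: "nat \<Rightarrow> (nat \<Rightarrow> nat) \<Rightarrow> nat \<Rightarrow> nat" where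
  "inv_table n w k = card {i \<in> {1..n}. i < inv w k \<and> w i > k}"

definition inv_le :: "nat \<Rightarrow> (nat \<Rightarrow> nat) \<Rightarrow> (nat \<Rightarrow> nat) \<Rightarrow> bool" where
  "inv_le n v w \<longleftrightarrow> (\<forall>k\<in>{1..n}. inv_table n v k \<le> inv_table n w k)"

definition inv_less :: "nat \<Rightarrow> (nat \<Rightarrow> nat) \<Rightarrow> (nat \<Rightarrow> nat) \<Rightarrow> bool" where
  "inv_less n v w \<longleftrightarrow> inv_le n v w \<and> v \<noteq> w"

definition inv_covers :: "nat \<Rightarrow> (nat \<Rightarrow> nat) \<Rightarrow> (nat \<Rightarrow> nat) \<Rightarrow> bool" where
  "inv_covers n w v \<longleftrightarrow> inv_less n v w \<and>
     \<not> (\<exists>u. u permutes {1..n} \<and> inv_less n v u \<and> inv_less n u w)"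

end

theory Submission
  imports Defs
begin

(*
  Swapping the entries at positions p < q of v, where v p < v q and every entry strictly
  between them is smaller than v p, raises the inversion table by exactly one at the value
  v p and leaves it unchanged elsewhere. The inversion table of v is the Lehmer code of v^-1,
  so it determines v; hence nothing lies strictly between v and such a swap. Conversely, if
  v < w then some value a = v p has a smaller table entry in v than in w. This leaves room
  for a larger value to the right of a in v. Swapping a with the first such value gives a
  permutation above v and still below w. If w covers v, w must be that swap.
*)

lemma card_Collect_permutes:
  assumes "p permutes S"
  shows "card {x \<in> S. P (p x)} = card {x \<in> S. P x}"
  by (rule bij_betw_same_card, rule bij_betw_Collect[OF permutes_imp_bij[OF assms]]) simp

lemma eq_of_card_less_eq:
  fixes a b :: "'a::linorder"
  assumes "finite R" "a \<in> R" "b \<in> R" "card {s \<in> R. s < a} = card {s \<in> R. s < b}"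
  shows "a = b"
proof -
  have "card {s \<in> R. s < c} < card {s \<in> R. s < d}" if "c < d" "c \<in> R" for c d
    using that \<open>finite R\<close> by (intro psubset_card_mono) auto
  then show ?thesis
    using assms by (cases a b rule: linorder_cases) fastforce+
qed

definition lehmer_code :: "nat \<Rightarrow> (nat \<Rightarrow> nat) \<Rightarrow> nat \<Rightarrow> nat" where
  "lehmer_code n x k = card {b \<in> {1..n}. k < b \<and> x b < x k}"

lemma lehmer_code_inj:
  assumes x: "x permutes {1..n}" and y: "y permutes {1..n}"
    and code: "\<forall>k\<in>{1..n}. lehmer_code n x k = lehmer_code n y k"
  shows "x = y"
proof
  fix k show "x k = y k"
  proof (induction k rule: less_induct)
    case (less k)
    show ?case
    proof (cases "k \<in> {1..n}")
      case False
      then show ?thesis using permutes_not_in[OF x] permutes_not_in[OF y] by simp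
    next
      case k: True
      (* x k is the element of rank lehmer_code n x k in x ` {k..n}, which is fixed by x on {1..<k} *)
      define L where "L = {b \<in> {1..n}. k \<le> b}"
      have tail: "z ` L = {1..n} - z ` {b \<in> {1..n}. b < k}" if "z permutes {1..n}" for z
      proof -
        have "L = {1..n} - {b \<in> {1..n}. b < k}" unfolding L_def by auto
        then show ?thesis
          using permutes_image[OF that] image_set_diff[OF permutes_inj[OF that]] by simp
      qed
      have "x ` {b \<in> {1..n}. b < k} = y ` {b \<in> {1..n}. b < k}"
        using less.IH by (intro image_cong) auto
      then have same_tail: "x ` L = y ` L" using tail[OF x] tail[OF y] by simp
      have rank: "card {s \<in> z ` L. s < z k} = lehmer_code n z k" if z: "z permutes {1..n}" for z
      proof -
        have "{b \<in> L. z b < z k} = {b \<in> {1..n}. k < b \<and> z b < z k}"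
          unfolding L_def using nat_less_le by auto
        moreover have "{s \<in> z ` L. s < z k} = z ` {b \<in> L. z b < z k}"
          by blast
        ultimately have "{s \<in> z ` L. s < z k} = z ` {b \<in> {1..n}. k < b \<and> z b < z k}"
          by simp
        then show ?thesis
          unfolding lehmer_code_def by (simp add: card_image permutes_inj_on[OF z])
      qed
      show "x k = y k"
      proof (rule eq_of_card_less_eq)
        show "finite (x ` L)" "x k \<in> x ` L" "y k \<in> x ` L"
          using k same_tail unfolding L_def by auto
        show "card {s \<in> x ` L. s < x k} = card {s \<in> x ` L. s < y k}"
          using rank[OF x] rank[OF y] same_tail code k by simp
      qed
    qed
  qed
qed

lemma inv_table_eq_lehmer_code_inv:
  assumes "v permutes {1..n}"
  shows "inv_table n v k = lehmer_code n (inv v) k"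
proof -
  have "inv_table n v k = card {b \<in> {1..n}. inv v b < inv v k \<and> k < v (inv v b)}"
    unfolding inv_table_def
    using card_Collect_permutes[OF permutes_inv[OF assms], of "\<lambda>i. i < inv v k \<and> k < v i"]
    by simp
  also have "\<dots> = lehmer_code n (inv v) k"
    unfolding lehmer_code_def by (simp add: permutes_inverses[OF assms] conj_commute)
  finally show ?thesis .
qed

lemma inv_table_inj:
  assumes v: "v permutes {1..n}" and w: "w permutes {1..n}"
    and table: "\<forall>k\<in>{1..n}. inv_table n v k = inv_table n w k"
  shows "v = w"
proof -
  have "inv v = inv w"
    using lehmer_code_inj[OF permutes_inv[OF v] permutes_inv[OF w]] table
    by (simp add: inv_table_eq_lehmer_code_inv[OF v] inv_table_eq_lehmer_code_inv[OF w])
  then show ?thesis by (metis permutes_inv_inv[OF v] permutes_inv_inv[OF w])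
qed

lemma card_Int_doubleton:
  assumes "p \<noteq> q"
  shows "card (X \<inter> {p, q}) = of_bool (p \<in> X) + of_bool (q \<in> X)"
  using assms by (cases "p \<in> X"; cases "q \<in> X") (auto simp: Int_insert_right)

definition covering_swap :: "nat \<Rightarrow> (nat \<Rightarrow> nat) \<Rightarrow> nat \<Rightarrow> nat \<Rightarrow> bool" where
  "covering_swap n v p q \<longleftrightarrow> 1 \<le> p \<and> p < q \<and> q \<le> n \<and> v p < v q \<and>
     (\<forall>j. p < j \<and> j < q \<longrightarrow> v j < v p)"

lemma covering_swap_permutes:
  assumes "v permutes {1..n}" and "covering_swap n v p q"
  shows "v \<circ> transpose p q permutes {1..n}"
  using assms by (intro permutes_compose[OF permutes_swap_id]) (auto simp: covering_swap_def)

lemma inv_table_covering_swap: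
  assumes v: "v permutes {1..n}" and swap: "covering_swap n v p q"
  shows "inv_table n (v \<circ> transpose p q) c = inv_table n v c + of_bool (c = v p)"
proof -
  define t where "t = transpose p q"
  define P where "P = inv v c"
  have pq: "p \<in> {1..n}" "q \<in> {1..n}" "p < q" "v p < v q"
    and mid: "\<And>j. p < j \<Longrightarrow> j < q \<Longrightarrow> v j < v p"
    using swap unfolding covering_swap_def by auto
  have c: "c = v P" unfolding P_def using permutes_inverses[OF v] by simp
  have P_eq_p: "P = p \<longleftrightarrow> c = v p" unfolding P_def using permutes_inv_eq[OF v] by auto
  define X where "X = {i \<in> {1..n}. i < t P \<and> c < v (t i)}"
  define Y where "Y = {i \<in> {1..n}. i < P \<and> c < v i}"
  have "inv (v \<circ> t) = t \<circ> inv v"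
    unfolding t_def using o_inv_distrib[OF permutes_bij[OF v] bij_transpose] by simp
  then have tables: "inv_table n (v \<circ> t) c = card X" "inv_table n v c = card Y"
    unfolding inv_table_def X_def Y_def P_def by simp_all
  (* off {p, q} nothing changes, since the entries strictly between p and q lie below v p *)
  have "X - {p, q} = Y - {p, q}"
    unfolding X_def Y_def t_def using mid pq c
    by (auto simp: transpose_def) (meson less_trans linorder_neqE_nat not_less_iff_gr_or_eq)+
  moreover have "card (X \<inter> {p, q}) = card (Y \<inter> {p, q}) + of_bool (c = v p)"
    unfolding card_Int_doubleton[OF less_imp_neq[OF \<open>p < q\<close>]]
    unfolding X_def Y_def t_def using mid pq c P_eq_p by (auto simp: transpose_def)
  moreover have "finite X" "finite Y" unfolding X_def Y_def by auto
  ultimately have "card X = card Y + of_bool (c = v p)"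
    using card_Int_Diff[of X "{p, q}"] card_Int_Diff[of Y "{p, q}"] by simp
  then show ?thesis using tables unfolding t_def by simp
qed

lemma inv_table_le_card_greater:
  assumes "w permutes {1..n}"
  shows "inv_table n w k \<le> card {j \<in> {1..n}. k < j}"
proof -
  have "inv_table n w k \<le> card {i \<in> {1..n}. k < w i}"
    unfolding inv_table_def by (rule card_mono) auto
  also have "\<dots> = card {j \<in> {1..n}. k < j}"
    by (rule card_Collect_permutes[OF assms])
  finally show ?thesis .
qed

lemma later_greater_if_inv_table_less:
  assumes v: "v permutes {1..n}" and less: "inv_table n v k < card {j \<in> {1..n}. k < j}"
  shows "\<exists>q\<in>{1..n}. inv v k < q \<and> k < v q"
proof -
  have "inv_table n v k < card {i \<in> {1..n}. k < v i}"
    using less card_Collect_permutes[OF v, of "\<lambda>j. k < j"] by simp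
  moreover have "card {i \<in> {1..n}. k < v i} \<le> inv_table n v k"
    if "{i \<in> {1..n}. k < v i} \<subseteq> {i \<in> {1..n}. i < inv v k \<and> k < v i}"
    unfolding inv_table_def using that by (intro card_mono) auto
  ultimately have "\<not> {i \<in> {1..n}. k < v i} \<subseteq> {i \<in> {1..n}. i < inv v k \<and> k < v i}"
    by linarith
  then obtain q where q: "q \<in> {1..n}" "k < v q" "\<not> q < inv v k" by blast
  moreover have "q \<noteq> inv v k" using q(2) permutes_inverses[OF v] by auto
  ultimately show ?thesis by (intro bexI[of _ q]) auto
qed

lemma inv_less_covering_swap:
  assumes v: "v permutes {1..n}" and swap: "covering_swap n v p q"
  shows "inv_less n v (v \<circ> transpose p q)"
proof -
  have "v \<circ> transpose p q \<noteq> v"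
  proof
    assume "v \<circ> transpose p q = v"
    then have "v q = v p" by (metis comp_apply transpose_apply_first)
    then show False using swap unfolding covering_swap_def by simp
  qed
  then show ?thesis
    unfolding inv_less_def inv_le_def inv_table_covering_swap[OF assms] by auto
qed

lemma covering_swap_below:
  assumes v: "v permutes {1..n}" and w: "w permutes {1..n}" and vw: "inv_less n v w"
  shows "\<exists>p q. covering_swap n v p q \<and> inv_le n (v \<circ> transpose p q) w"
proof -
  obtain a where a: "a \<in> {1..n}" "inv_table n v a < inv_table n w a"
    using vw inv_table_inj[OF v w] unfolding inv_less_def inv_le_def by (meson le_neq_implies_less)
  define p where "p = inv v a"
  have p: "p \<in> {1..n}" "v p = a"
    unfolding p_def using a(1) permutes_in_image[OF permutes_inv[OF v]] permutes_inverses[OF v]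
    by auto
  have "inv_table n v a < card {j \<in> {1..n}. a < j}"
    using inv_table_le_card_greater[OF w, of a] a(2) by linarith
  then have "\<exists>q. q \<in> {1..n} \<and> p < q \<and> a < v q"
    using later_greater_if_inv_table_less[OF v] unfolding p_def by blast
  define q where "q = (LEAST q. q \<in> {1..n} \<and> p < q \<and> a < v q)"
  have q: "q \<in> {1..n}" "p < q" "a < v q"
    using LeastI_ex[OF \<open>\<exists>q. _\<close>] unfolding q_def by auto
  have least: "q \<le> j" if "j \<in> {1..n}" "p < j" "a < v j" for j
    unfolding q_def using that by (intro Least_le) simp
  have "v j < v p" if "p < j" "j < q" for j
  proof -
    have "v j \<noteq> v p" using that permutes_inj[OF v] by (metis injD less_irrefl)
    moreover have "j \<in> {1..n}" using that p(1) q(1) by auto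
    ultimately show ?thesis using least[of j] that p(2) by fastforce
  qed
  then have swap: "covering_swap n v p q"
    unfolding covering_swap_def using p q by auto
  have "inv_table n v c + of_bool (c = v p) \<le> inv_table n w c" if "c \<in> {1..n}" for c
    using vw a p(2) that unfolding inv_less_def inv_le_def by (cases "c = a") auto
  then have "inv_le n (v \<circ> transpose p q) w"
    unfolding inv_le_def inv_table_covering_swap[OF v swap] by blast
  with swap show ?thesis by blast
qed

lemma inv_covers_covering_swap:
  assumes v: "v permutes {1..n}" and swap: "covering_swap n v p q"
  shows "inv_covers n (v \<circ> transpose p q) v"
proof -
  define w where "w = v \<circ> transpose p q"
  have "u = v \<or> u = w"
    if u: "u permutes {1..n}" and "inv_le n v u" "inv_le n u w" for u
  proof -
    have between: "inv_table n v c \<le> inv_table n u c \<and>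
        inv_table n u c \<le> inv_table n v c + of_bool (c = v p)" if "c \<in> {1..n}" for c
      using that \<open>inv_le n v u\<close> \<open>inv_le n u w\<close>
      unfolding inv_le_def w_def inv_table_covering_swap[OF v swap] by simp
    show ?thesis
    proof (cases "inv_table n u (v p) = inv_table n v (v p)")
      case True
      have "inv_table n u c = inv_table n v c" if "c \<in> {1..n}" for c
        using between[OF that] True by (cases "c = v p") auto
      then have "u = v" by (simp add: inv_table_inj[OF u v])
      then show ?thesis ..
    next
      case False
      have "inv_table n u c = inv_table n w c" if "c \<in> {1..n}" for c
        using between[OF that] False
        by (cases "c = v p") (auto simp: w_def inv_table_covering_swap[OF v swap])
      then have "u = w"
        by (simp add: inv_table_inj[OF u covering_swap_permutes[OF v swap, folded w_def]])
      then show ?thesis ..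
    qed
  qed
  then show ?thesis
    using inv_less_covering_swap[OF v swap] unfolding inv_covers_def inv_less_def w_def by blast
qed

lemma inv_covers_iff_covering_swap:
  assumes v: "v permutes {1..n}" and w: "w permutes {1..n}"
  shows "inv_covers n w v \<longleftrightarrow> (\<exists>p q. covering_swap n v p q \<and> w = v \<circ> transpose p q)"
proof
  assume cover: "inv_covers n w v"
  then obtain p q where swap: "covering_swap n v p q"
    and below: "inv_le n (v \<circ> transpose p q) w"
    using covering_swap_below[OF v w] unfolding inv_covers_def by blast
  have "w = v \<circ> transpose p q"
  proof (rule ccontr)
    assume "w \<noteq> v \<circ> transpose p q"
    then have "inv_less n (v \<circ> transpose p q) w" using below unfolding inv_less_def by auto
    then show False
      using cover inv_less_covering_swap[OF v swap] covering_swap_permutes[OF v swap]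
      unfolding inv_covers_def by blast
  qed
  with swap show "\<exists>p q. covering_swap n v p q \<and> w = v \<circ> transpose p q" by blast
next
  assume "\<exists>p q. covering_swap n v p q \<and> w = v \<circ> transpose p q"
  then show "inv_covers n w v" using inv_covers_covering_swap[OF v] by blast
qed

lemma permutes_eq_comp_transpose:
  assumes v: "v permutes S" and w: "w permutes S" and "i \<in> S" and "k \<in> S"
    and "\<forall>j\<in>S. j \<notin> {i, k} \<longrightarrow> w j = v j" and "w i = v k" and "w k = v i"
  shows "w = v \<circ> transpose i k"
proof
  fix j
  show "w j = (v \<circ> transpose i k) j"
    using assms permutes_not_in[OF v] permutes_not_in[OF w]
    by (cases "j \<in> S") (auto simp: transpose_def)
qed

theorem proposition3p1:
  fixes n :: nat and v w :: "nat \<Rightarrow> nat"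
  assumes "v permutes {1..n}" and "w permutes {1..n}"
  shows "inv_covers n w v \<longleftrightarrow>
    (\<exists>i k. 1 \<le> i \<and> i < k \<and> k \<le> n \<and>
       (\<forall>j\<in>{1..n}. j \<notin> {i, k} \<longrightarrow> w j = v j) \<and>
       v i = w k \<and> w k < w i \<and> w i = v k \<and>
       (\<forall>j. i < j \<and> j < k \<longrightarrow> w j < w k))"
    (is "_ \<longleftrightarrow> (\<exists>i k. ?swap i k)")
proof -
  have "covering_swap n v i k \<and> w = v \<circ> transpose i k \<longleftrightarrow> ?swap i k" for i k
  proof
    assume "covering_swap n v i k \<and> w = v \<circ> transpose i k"
    then show "?swap i k" by (auto simp: covering_swap_def transpose_def)
  next
    assume swap: "?swap i k"
    then have "w = v \<circ> transpose i k"
      using assms by (intro permutes_eq_comp_transpose[of v "{1..n}"]) auto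
    moreover have "covering_swap n v i k"
      using swap unfolding covering_swap_def by force
    ultimately show "covering_swap n v i k \<and> w = v \<circ> transpose i k" by blast
  qed
  then show ?thesis using inv_covers_iff_covering_swap[OF assms] by blast
qed

end
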